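(* Let $r\in\{1,\dots,p\}$, $l\in\{1,\dots,r\}$, $L=\{1,\dots,l\}$, and let $1\le t_1<\dots<t_l\le r$ be integers; set $t_{l+1}:=r+1$ and $P=\{t_\iota:\iota\in L\}$. Let $\delta_{t_\iota}\in\mathbb{R}$ ($\iota\in L$) satisfy $\delta_{t_\iota}\ge h_{t_{\iota+1}}-h_{t_\iota}$ for all $\iota\in L$ and $\sum_{\iota\in L}\delta_{t_\iota}\le h_{r+1}$. Let $v\in\{1,\dots,p-r+l\}$, $V=\{1,\dots,v\}$, and let $r+1\le q_1<\dots<q_v\le m$ be integers, $Q=\{q_\iota:\iota\in V\}$. For $j\in M$ let $a_j=|\{\iota\in L:t_\iota<j\}|$ and $F_j=\sum_{i=1}^j\pi_i$, and let $A_j\subseteq V$ be arbitrary. Suppose $(\phi_{q_1},\dots,\phi_{q_v})\in\mathbb{R}^v_+$ is such that for every $j\in M$ there exists $\beta_j\ge0$ with $$\max\Big\{\tfrac{\phi_{q_\iota}}{m\pi_{q_\iota}}:\iota\in A_j,\ q_\iota>j\Big\}\le\beta_j\le\min\Big\{\tfrac{\phi_{q_\iota}}{m\pi_{q_\iota}}:\iota\in V\setminus A_j,\ q_\iota>j\Big\}$$ (with $\max\emptyset=-\infty$, $\min\emptyset=+\infty$) and $$\beta_j\Big(F_j-\pi_j-\varepsilon+\sum_{\iota\in V,\ q_\iota>j}\pi_{q_\iota}-\sum_{\iota\in A_j,\ q_\iota>j}\pi_{q_\iota}\Big)\ \ge\ \frac1m\Big(h_{t_{a_j+1}}-h_j-\sum_{\iota\in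 L,\ t_\iota<j}\delta_{t_\iota}-\mathbb{I}(j\in Q)\,\phi_j-\sum_{\iota\in A_j,\ q_\iota>j}\phi_{q_\iota}\Big),$$ where $\mathbb{I}(j\in Q)=1$ if $j\in Q$ and $0$ otherwise, and for $j\in Q$, $\phi_j$ denotes $\phi_{q_\iota}$ with $q_\iota=j$. Then the inequality $$z+\sum_{\iota=1}^l\big(h_{t_\iota}-h_{t_{\iota+1}}+\delta_{t_\iota}\big)x_{t_\iota}+\sum_{\iota=1}^v\phi_{q_\iota}(1-x_{q_\iota})\ \ge\ h_{t_1}$$ is valid for $\operatorname{proj}_{(z,\mathbf{x})}\operatorname{conv}(\mathcal{S}_c)$, and hence valid for $\operatorname{conv}(\mathcal{F}_c)$.
   Context: Let $m\ge2$, $M=\{1,\dots,m\}$, $\varepsilon\in[0,1)$, $\boldsymbol{\pi}\in\mathbb{R}^m$ with $\pi_i>0$, $\pi_i\le\varepsilon$ for all $i$ and $\sum_i\pi_i=1$, and $h_1\ge h_2\ge\dots\ge h_m\ge0$. Let $p=\max\{k:\sum_{i=1}^k\pi_i\le\varepsilon\}$ (so $1\le p\le m-1$). The mixing set with a knapsack constraint is $\mathcal{F}_c=\{(z,\mathbf{x})\in\mathbb{R}_+\times\{0,1\}^m : x_i=0\Rightarrow z\ge h_i\ \forall i\in M,\ \boldsymbol{\pi}^\top\mathbf{x}\le\varepsilon\}$. Let $\Xi_c=\{(z,\mathbf{x})\in\mathbb{R}_+\times\mathbb{R}^m_+ : \mathbf{x}\le\mathbf{1},\ \boldsymbol{\pi}^\top\mathbf{x}\le\varepsilon\}$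 and $\Delta_m=\{\mathbf{y}\in\mathbb{Z}^m_+:\mathbf{1}^\top\mathbf{y}\le1\}$. The bilinear set $\mathcal{S}_c$ is the set of $(z,\mathbf{x};\mathbf{y})\in\Xi_c\times\Delta_m$ satisfying: $(1-x_i)(1-\mathbf{1}^\top\mathbf{y})\ge0$ and $-(1-x_i)(1-\mathbf{1}^\top\mathbf{y})\ge0$ for all $i\in M$; $zy_i-h_iy_i\ge0$ for all $i\in M$; $-x_iy_i\ge0$ for all $i\in M$; $-(1-x_i)y_j\ge0$ for all $i,j\in M$ with $i<j$. *)

theory Defs
  imports "HOL-Analysis.Analysis" "HOL-Library.Function_Algebras"
begin

text \<open>Vectors of R^m are represented as functions nat => real, indexed by 1..m
  and zero outside {1..m}. To use the library notion of convex hull we make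
  nat => real (pointwise) a real vector space.\<close>

instantiation "fun" :: (type, real_vector) real_vector
begin
definition scaleR_fun :: "real \<Rightarrow> ('a \<Rightarrow> 'b) \<Rightarrow> 'a \<Rightarrow> 'b" where
  "scaleR_fun c f = (\<lambda>x. c *\<^sub>R f x)"
instance
  by standard (auto simp: scaleR_fun_def fun_eq_iff scaleR_add_right scaleR_add_left)
end

definition Fc :: "nat \<Rightarrow> real \<Rightarrow> (nat \<Rightarrow> real) \<Rightarrow> (nat \<Rightarrow> real)
                  \<Rightarrow> (real \<times> (nat \<Rightarrow> real)) set" where
  "Fc m \<epsilon> \<pi> h = {(z, x). z \<ge> 0
       \<and> (\<forall>i\<in>{1..m}. x i \<in> {0, 1})
       \<and> (\<forall>i. i \<notin> {1..m} \<longrightarrow> x i = 0)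
       \<and> (\<forall>i\<in>{1..m}. x i = 0 \<longrightarrow> z \<ge> h i)
       \<and> (\<Sum>i=1..m. \<pi> i * x i) \<le> \<epsilon>}"

definition Xic :: "nat \<Rightarrow> real \<Rightarrow> (nat \<Rightarrow> real) \<Rightarrow> (real \<times> (nat \<Rightarrow> real)) set" where
  "Xic m \<epsilon> \<pi> = {(z, x). z \<ge> 0
       \<and> (\<forall>i\<in>{1..m}. 0 \<le> x i \<and> x i \<le> 1)
       \<and> (\<forall>i. i \<notin> {1..m} \<longrightarrow> x i = 0)
       \<and> (\<Sum>i=1..m. \<pi> i * x i) \<le> \<epsilon>}"

definition Delta :: "nat \<Rightarrow> (nat \<Rightarrow> real) set" where
  "Delta m = {y. (\<forall>i\<in>{1..m}. y i \<in> \<int> \<and> y i \<ge> 0)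
       \<and> (\<forall>i. i \<notin> {1..m} \<longrightarrow> y i = 0)
       \<and> (\<Sum>i=1..m. y i) \<le> 1}"

definition Sc :: "nat \<Rightarrow> real \<Rightarrow> (nat \<Rightarrow> real) \<Rightarrow> (nat \<Rightarrow> real)
                  \<Rightarrow> (real \<times> (nat \<Rightarrow> real) \<times> (nat \<Rightarrow> real)) set" where
  "Sc m \<epsilon> \<pi> h = {(z, x, y). (z, x) \<in> Xic m \<epsilon> \<pi> \<and> y \<in> Delta m
       \<and> (\<forall>i\<in>{1..m}. (1 - x i) * (1 - (\<Sum>k=1..m. y k)) \<ge> 0)
       \<and> (\<forall>i\<in>{1..m}. - ((1 - x i) * (1 - (\<Sum>k=1..m. y k))) \<ge> 0)
       \<and> (\<forall>i\<in>{1..m}. z * y i - h i * y i \<ge> 0)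
       \<and> (\<forall>i\<in>{1..m}. - (x i * y i) \<ge> 0)
       \<and> (\<forall>i\<in>{1..m}. \<forall>j\<in>{1..m}. i < j \<longrightarrow> - ((1 - x i) * y j) \<ge> 0)}"

definition projConvSc :: "nat \<Rightarrow> real \<Rightarrow> (nat \<Rightarrow> real) \<Rightarrow> (nat \<Rightarrow> real)
                  \<Rightarrow> (real \<times> (nat \<Rightarrow> real)) set" where
  "projConvSc m \<epsilon> \<pi> h = (\<lambda>(z, x, y). (z, x)) ` (convex hull (Sc m \<epsilon> \<pi> h))"

end

theory Submission
  imports Defs
begin

(* The left-hand side is affine in (z, x), so the inequality cuts out a convex set and it
   suffices to check it on F_c and on the (z, x)-projection of S_c.  Every such point is a
   prefix point for some j: x_1 = ... = x_(j-1) = 1, x_j = 0 and z >= h_j (for S_c the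
   vector y is the unit vector e_j, for F_c take the first zero coordinate of x).  At a
   prefix point the t-terms telescope to at least h_(t_1) - h_(t_(a_j+1)) plus the deltas
   with t_iota < j, the knapsack constraint bounds the sum of pi_q x_q over q > j by
   epsilon - F_j + pi_j, and comparing each phi_q with b pi_q for b = m beta_j, from above
   or from below according to A_j, reduces the inequality to the hypothesis on beta_j.
   Besides epsilon < 1 = sum of the pi_i, pi > 0 and the beta-conditions, only t_1 >= 1,
   1 <= q_1, q_v <= m and the monotonicity of t and q are used. *)

definition mixing_lhs :: "(nat \<Rightarrow> real) \<Rightarrow> (nat \<Rightarrow> nat) \<Rightarrow> nat set
    \<Rightarrow> (nat \<Rightarrow> real) \<Rightarrow> (nat \<Rightarrow> nat) \<Rightarrow> nat set \<Rightarrow> real \<times> (nat \<Rightarrow> real) \<Rightarrow> real" where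
  "mixing_lhs a t I b q J = (\<lambda>(z, x). z + (\<Sum>i\<in>I. a i * x (t i)) + (\<Sum>i\<in>J. b i * (1 - x (q i))))"

lemma linear_mixing_part:
  "linear (\<lambda>(z::real, x::nat \<Rightarrow> real). z + (\<Sum>i\<in>I. a i * x (t i)) - (\<Sum>i\<in>J. b i * x (q i)))"
  by (rule linearI) (auto simp: scaleR_fun_def sum.distrib sum_distrib_left algebra_simps)

lemma convex_mixing_lhs_ge: "convex {w. c \<le> mixing_lhs a t I b q J w}"
proof -
  let ?f = "\<lambda>(z::real, x::nat \<Rightarrow> real). z + (\<Sum>i\<in>I. a i * x (t i)) - (\<Sum>i\<in>J. b i * x (q i))"
  have "{w. c \<le> mixing_lhs a t I b q J w} = ?f -` {c - (\<Sum>i\<in>J. b i)..}"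
    by (auto simp: mixing_lhs_def right_diff_distrib sum_subtractf)
  then show ?thesis
    by (simp only: convex_linear_vimage[OF linear_mixing_part convex_real_interval(1)])
qed

definition prefix_points :: "nat \<Rightarrow> real \<Rightarrow> (nat \<Rightarrow> real) \<Rightarrow> (nat \<Rightarrow> real) \<Rightarrow> nat
    \<Rightarrow> (real \<times> (nat \<Rightarrow> real)) set" where
  "prefix_points m \<epsilon> \<pi> h j =
     {(z, x) \<in> Xic m \<epsilon> \<pi>. (\<forall>i\<in>{1..<j}. x i = 1) \<and> x j = 0 \<and> h j \<le> z}"

lemma Xic_bounds:
  assumes "(z, x) \<in> Xic m \<epsilon> \<pi>"
  shows "0 \<le> x i" "x i \<le> 1"
  using assms by (cases "i \<in> {1..m}"; auto simp: Xic_def)+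

lemma knapsack_not_all_one:
  fixes \<pi> x :: "nat \<Rightarrow> real"
  assumes "(\<Sum>i=1..m. \<pi> i) = 1" "\<epsilon> < 1" "(\<Sum>i=1..m. \<pi> i * x i) \<le> \<epsilon>"
  shows "\<exists>i\<in>{1..m}. x i \<noteq> 1"
proof (rule ccontr)
  assume "\<not> ?thesis"
  then have "(\<Sum>i=1..m. \<pi> i * x i) = (\<Sum>i=1..m. \<pi> i)"
    by (intro sum.cong) auto
  with assms show False by simp
qed

lemma Fc_subset_Xic: "Fc m \<epsilon> \<pi> h \<subseteq> Xic m \<epsilon> \<pi>"
  unfolding Fc_def Xic_def by force

lemma Fc_subset_prefix_points:
  assumes "(\<Sum>i=1..m. \<pi> i) = 1" "\<epsilon> < 1"
  shows "Fc m \<epsilon> \<pi> h \<subseteq> (\<Union>j\<in>{1..m}. prefix_points m \<epsilon> \<pi> h j)"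
proof safe
  fix z x assume zx: "(z, x) \<in> Fc m \<epsilon> \<pi> h"
  then have bin: "\<forall>i\<in>{1..m}. x i \<in> {0, 1}" and knap: "(\<Sum>i=1..m. \<pi> i * x i) \<le> \<epsilon>"
    by (auto simp: Fc_def)
  then have "\<exists>i. i \<in> {1..m} \<and> x i = 0"
    using knapsack_not_all_one[OF assms] by blast
  then obtain j where j: "j \<in> {1..m}" "x j = 0" and below: "\<forall>i<j. \<not> (i \<in> {1..m} \<and> x i = 0)"
    using exists_least_iff[of "\<lambda>i. i \<in> {1..m} \<and> x i = 0", THEN iffD1] by blast
  have "\<forall>i\<in>{1..<j}. x i = 1"
  proof
    fix i assume i: "i \<in> {1..<j}"
    then have "i \<in> {1..m}"
      using j(1) by simp
    moreover have "x i \<noteq> 0"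
      using below i \<open>i \<in> {1..m}\<close> by simp
    ultimately show "x i = 1"
      using bin by blast
  qed
  moreover have "h j \<le> z"
    using zx j unfolding Fc_def by blast
  ultimately have "(z, x) \<in> prefix_points m \<epsilon> \<pi> h j"
    using zx Fc_subset_Xic j(2) unfolding prefix_points_def by blast
  with j(1) show "(z, x) \<in> (\<Union>j\<in>{1..m}. prefix_points m \<epsilon> \<pi> h j)"
    by blast
qed

lemma nonneg_Ints_sum_eq_one:
  fixes y :: "'a \<Rightarrow> real"
  assumes "finite I" "\<forall>i\<in>I. y i \<in> \<int> \<and> 0 \<le> y i" "sum y I = 1"
  shows "\<exists>j\<in>I. y j = 1"
proof -
  obtain j where j: "j \<in> I" "y j \<noteq> 0"
    using assms(3) sum.neutral by force
  moreover obtain k where "y j = of_int k"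
    using assms(2) j(1) Ints_cases by blast
  ultimately have "1 \<le> y j"
    using assms(2) j by fastforce
  moreover have "y j \<le> 1"
    using member_le_sum[of j I y] assms j by auto
  ultimately show ?thesis using j by force
qed

lemma linear_drop_third: "linear (\<lambda>(z::real, x::nat \<Rightarrow> real, y::nat \<Rightarrow> real). (z, x))"
  by (rule linearI) auto

lemma projConvSc_eq_convex_hull:
  "projConvSc m \<epsilon> \<pi> h = convex hull ((\<lambda>(z, x, y). (z, x)) ` Sc m \<epsilon> \<pi> h)"
  unfolding projConvSc_def by (rule convex_hull_linear_image[OF linear_drop_third])

lemma Sc_proj_subset_prefix_points:
  assumes "(\<Sum>i=1..m. \<pi> i) = 1" "\<epsilon> < 1"
  shows "(\<lambda>(z, x, y). (z, x)) ` Sc m \<epsilon> \<pi> h \<subseteq> (\<Union>j\<in>{1..m}. prefix_points m \<epsilon> \<pi> h j)"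
proof safe
  fix z x y assume "(z, x, y) \<in> Sc m \<epsilon> \<pi> h"
  then have X: "(z, x) \<in> Xic m \<epsilon> \<pi>" and Y: "y \<in> Delta m"
    and complementary: "\<forall>i\<in>{1..m}. (1 - x i) * (1 - (\<Sum>k=1..m. y k)) = 0"
    and z_ge: "\<forall>i\<in>{1..m}. z * y i - h i * y i \<ge> 0"
    and x_y: "\<forall>i\<in>{1..m}. x i * y i \<le> 0"
    and below: "\<forall>i\<in>{1..m}. \<forall>j\<in>{1..m}. i < j \<longrightarrow> (1 - x i) * y j \<le> 0"
    unfolding Sc_def by (fastforce intro: antisym)+
  have "(\<Sum>k=1..m. y k) = 1"
    using complementary knapsack_not_all_one[OF assms] X by (force simp: Xic_def)
  then obtain j where j: "j \<in> {1..m}" "y j = 1"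
    using nonneg_Ints_sum_eq_one[of "{1..m}" y] Y by (auto simp: Delta_def)
  have "h j \<le> z"
    using z_ge j by force
  moreover have "x j = 0"
    using bspec[OF x_y j(1)] Xic_bounds[OF X, of j] j(2) by simp
  moreover have "\<forall>i\<in>{1..<j}. x i = 1"
  proof
    fix i assume "i \<in> {1..<j}"
    then have "(1 - x i) * y j \<le> 0"
      using below j(1) by simp
    then show "x i = 1"
      using Xic_bounds[OF X, of i] j(2) by simp
  qed
  ultimately have "(z, x) \<in> prefix_points m \<epsilon> \<pi> h j"
    using X unfolding prefix_points_def by blast
  with j(1) show "(z, x) \<in> (\<Union>j\<in>{1..m}. prefix_points m \<epsilon> \<pi> h j)"
    by blast
qed

lemma strict_mono_on_image_atLeastAtMost:
  fixes f :: "'a::order \<Rightarrow> 'b::preorder"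
  assumes "strict_mono_on {a..b} f" "a \<le> b"
  shows "f ` {a..b} \<subseteq> {f a..f b}"
  using strict_mono_on_leD[OF assms(1)] assms(2) by auto

lemma strict_mono_on_below_eq_atLeastAtMost:
  fixes t :: "nat \<Rightarrow> 'a::linorder"
  assumes "strict_mono_on {1..l} t"
  shows "{i\<in>{1..l}. t i < c} = {1..card {i\<in>{1..l}. t i < c}}"
proof (cases "{i\<in>{1..l}. t i < c} = {}")
  case False
  define S where "S = {i\<in>{1..l}. t i < c}"
  have "Max S \<in> S"
    using False unfolding S_def by (intro Max_in) auto
  have "S = {1..Max S}"
  proof
    show "S \<subseteq> {1..Max S}"
      by (auto simp: S_def)
    show "{1..Max S} \<subseteq> S"
    proof
      fix i assume i: "i \<in> {1..Max S}"
      then have "t i \<le> t (Max S)"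
        using \<open>Max S \<in> S\<close> strict_mono_on_leD[OF assms] by (auto simp: S_def)
      with i \<open>Max S \<in> S\<close> show "i \<in> S"
        by (auto simp: S_def)
    qed
  qed
  then show ?thesis
    by (metis S_def card_atLeastAtMost diff_Suc_1)
qed simp

lemma sum_telescoping_ge:
  fixes t :: "nat \<Rightarrow> nat" and h \<delta> x :: "nat \<Rightarrow> real"
  assumes t: "strict_mono_on {1..l} t"
    and delta_lb: "\<forall>i\<in>{1..l}. h (t (i + 1)) - h (t i) \<le> \<delta> (t i)"
    and x_nonneg: "\<forall>i\<in>{1..l}. 0 \<le> x (t i)"
    and x_one: "\<forall>i\<in>{1..l}. t i < c \<longrightarrow> x (t i) = 1"
  shows "h (t 1) - h (t (card {i\<in>{1..l}. t i < c} + 1)) + (\<Sum>i\<in>{i\<in>{1..l}. t i < c}. \<delta> (t i))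
    \<le> (\<Sum>i=1..l. (h (t i) - h (t (i + 1)) + \<delta> (t i)) * x (t i))"
proof -
  define S where "S = {i\<in>{1..l}. t i < c}"
  define a where "a = card S"
  have S: "S = {1..a}"
    unfolding S_def a_def by (rule strict_mono_on_below_eq_atLeastAtMost[OF t])
  have "h (t 1) - h (t (a + 1)) = (\<Sum>i\<in>S. h (t i) - h (t (i + 1)))"
    using sum_Suc_diff[of 1 a "\<lambda>i. - h (t i)"] by (simp add: S)
  then have "h (t 1) - h (t (a + 1)) + (\<Sum>i\<in>S. \<delta> (t i))
      = (\<Sum>i\<in>S. (h (t i) - h (t (i + 1)) + \<delta> (t i)) * x (t i))"
    using x_one by (simp add: sum.distrib S_def)
  also have "\<dots> \<le> (\<Sum>i=1..l. (h (t i) - h (t (i + 1)) + \<delta> (t i)) * x (t i))"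
  proof (intro sum_mono2)
    fix i assume "i \<in> {1..l} - S"
    then have "i \<in> {1..l}" by simp
    then have "h (t (i + 1)) - h (t i) \<le> \<delta> (t i)" "0 \<le> x (t i)"
      using delta_lb x_nonneg by blast+
    then show "0 \<le> (h (t i) - h (t (i + 1)) + \<delta> (t i)) * x (t i)"
      by (intro mult_nonneg_nonneg) linarith+
  qed (auto simp: S_def)
  finally show ?thesis
    unfolding S_def a_def .
qed

lemma sum_hit_plus_tail_le:
  fixes q :: "nat \<Rightarrow> nat" and \<phi> x :: "nat \<Rightarrow> real"
  assumes phi_nonneg: "\<forall>i\<in>{1..v}. 0 \<le> \<phi> (q i)"
    and x_le: "\<forall>i\<in>{1..v}. x (q i) \<le> 1"
    and xj: "x j = 0"
  shows "(if j \<in> q ` {1..v} then \<phi> j else 0) + (\<Sum>i\<in>{i\<in>{1..v}. j < q i}. \<phi> (q i) * (1 - x (q i)))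
    \<le> (\<Sum>i=1..v. \<phi> (q i) * (1 - x (q i)))"
proof (cases "j \<in> q ` {1..v}")
  case True
  then obtain k where k: "k \<in> {1..v}" "q k = j"
    by blast
  then have "\<phi> j + (\<Sum>i\<in>{i\<in>{1..v}. j < q i}. \<phi> (q i) * (1 - x (q i)))
      = (\<Sum>i\<in>insert k {i\<in>{1..v}. j < q i}. \<phi> (q i) * (1 - x (q i)))"
    using xj by simp
  also have "\<dots> \<le> (\<Sum>i=1..v. \<phi> (q i) * (1 - x (q i)))"
    using k phi_nonneg x_le by (intro sum_mono2) auto
  finally show ?thesis
    using True by simp
next
  case False
  then show ?thesis
    using phi_nonneg x_le by (simp, intro sum_mono2) auto
qed

lemma sum_mult_one_minus_ge:
  fixes f w y :: "'a \<Rightarrow> real"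
  assumes "finite G"
    and y: "\<forall>i\<in>G. 0 \<le> y i \<and> y i \<le> 1"
    and f_le: "\<forall>i\<in>G \<inter> A. f i \<le> b * w i"
    and f_ge: "\<forall>i\<in>G - A. b * w i \<le> f i"
  shows "(\<Sum>i\<in>G \<inter> A. f i) + b * ((\<Sum>i\<in>G - A. w i) - (\<Sum>i\<in>G. w i * y i))
    \<le> (\<Sum>i\<in>G. f i * (1 - y i))"
proof -
  have "(\<Sum>i\<in>G \<inter> A. f i - b * (w i * y i)) \<le> (\<Sum>i\<in>G \<inter> A. f i * (1 - y i))"
  proof (intro sum_mono)
    fix i assume "i \<in> G \<inter> A"
    then have "f i * y i \<le> b * w i * y i"
      using f_le y by (intro mult_right_mono) auto
    then show "f i - b * (w i * y i) \<le> f i * (1 - y i)"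
      by (simp add: algebra_simps)
  qed
  moreover have "(\<Sum>i\<in>G - A. b * w i - b * (w i * y i)) \<le> (\<Sum>i\<in>G - A. f i * (1 - y i))"
  proof (intro sum_mono)
    fix i assume "i \<in> G - A"
    then have "b * w i * (1 - y i) \<le> f i * (1 - y i)"
      using f_ge y by (intro mult_right_mono) auto
    then show "b * w i - b * (w i * y i) \<le> f i * (1 - y i)"
      by (simp add: algebra_simps)
  qed
  ultimately show ?thesis
    using sum.Int_Diff[OF assms(1), of "\<lambda>i. f i * (1 - y i)" A]
      sum.Int_Diff[OF assms(1), of "\<lambda>i. w i * y i" A]
    by (simp add: sum_subtractf sum_distrib_left algebra_simps)
qed

lemma knapsack_tail_le:
  fixes q :: "nat \<Rightarrow> nat" and \<pi> x :: "nat \<Rightarrow> real"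
  assumes j: "j \<in> {1..m}"
    and pi_nonneg: "\<forall>i\<in>{1..m}. 0 \<le> \<pi> i" and x_nonneg: "\<forall>i\<in>{1..m}. 0 \<le> x i"
    and x_one: "\<forall>i\<in>{1..<j}. x i = 1" and xj: "x j = 0"
    and knap: "(\<Sum>i=1..m. \<pi> i * x i) \<le> \<epsilon>"
    and q: "strict_mono_on {1..v} q" "q ` {1..v} \<subseteq> {1..m}"
  shows "(\<Sum>i\<in>{i\<in>{1..v}. j < q i}. \<pi> (q i) * x (q i)) \<le> \<epsilon> - ((\<Sum>i=1..j. \<pi> i) - \<pi> j)"
proof -
  let ?G = "{i\<in>{1..v}. j < q i}"
  have "inj_on q ?G"
    using strict_mono_on_imp_inj_on[OF q(1)] by (rule inj_on_subset) auto
  then have "(\<Sum>i\<in>?G. \<pi> (q i) * x (q i)) = (\<Sum>k\<in>q ` ?G. \<pi> k * x k)"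
    by (simp add: sum.reindex)
  also have "\<dots> \<le> (\<Sum>k\<in>{j<..m}. \<pi> k * x k)"
    using q(2) pi_nonneg x_nonneg by (intro sum_mono2) (auto simp: image_subset_iff)
  also have "\<dots> = (\<Sum>k=1..m. \<pi> k * x k) - (\<Sum>k=1..j. \<pi> k * x k)"
  proof -
    have "{1..m} = {1..j} \<union> {j<..m}"
      using j by auto
    then have "(\<Sum>k=1..m. \<pi> k * x k) = (\<Sum>k=1..j. \<pi> k * x k) + (\<Sum>k\<in>{j<..m}. \<pi> k * x k)"
      by (simp only:) (rule sum.union_disjoint, auto)
    then show ?thesis
      by simp
  qed
  also have "(\<Sum>k=1..j. \<pi> k * x k) = (\<Sum>k=1..j. \<pi> k) - \<pi> j"
  proof -
    have "(\<Sum>k=1..j. \<pi> k - \<pi> k * x k) = (\<Sum>k=1..j. if k = j then \<pi> j else 0)"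
      using x_one xj by (intro sum.cong) auto
    then show ?thesis
      using j by (simp add: sum_subtractf)
  qed
  finally show ?thesis
    using knap by linarith
qed

lemma mixing_lhs_ge_at_prefix_point:
  fixes m l v j :: nat and \<epsilon> z :: real and \<pi> h \<delta> \<phi> x :: "nat \<Rightarrow> real"
    and t q :: "nat \<Rightarrow> nat" and A :: "nat set"
  assumes j: "j \<in> {1..m}" and zx: "(z, x) \<in> prefix_points m \<epsilon> \<pi> h j"
    and pi_pos: "\<forall>i\<in>{1..m}. \<pi> i > 0"
    and t: "strict_mono_on {1..l} t" "1 \<le> t 1"
    and delta_lb: "\<forall>i\<in>{1..l}. \<delta> (t i) \<ge> h (t (i + 1)) - h (t i)"
    and q: "strict_mono_on {1..v} q" "q ` {1..v} \<subseteq> {1..m}"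
    and A: "A \<subseteq> {1..v}"
    and phi_nonneg: "\<forall>i\<in>{1..v}. \<phi> (q i) \<ge> 0"
    and beta: "\<exists>\<beta>::real. \<beta> \<ge> 0
        \<and> (\<forall>i\<in>A. q i > j \<longrightarrow> \<phi> (q i) / (real m * \<pi> (q i)) \<le> \<beta>)
        \<and> (\<forall>i\<in>{1..v} - A. q i > j \<longrightarrow> \<beta> \<le> \<phi> (q i) / (real m * \<pi> (q i)))
        \<and> \<beta> * ((\<Sum>i=1..j. \<pi> i) - \<pi> j - \<epsilon>
                + (\<Sum>i\<in>{i\<in>{1..v}. q i > j}. \<pi> (q i))
                - (\<Sum>i\<in>{i\<in>A. q i > j}. \<pi> (q i)))
          \<ge> (1 / real m) * (h (t (card {i\<in>{1..l}. t i < j} + 1)) - h j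
                - (\<Sum>i\<in>{i\<in>{1..l}. t i < j}. \<delta> (t i))
                - (if j \<in> q ` {1..v} then \<phi> j else 0)
                - (\<Sum>i\<in>{i\<in>A. q i > j}. \<phi> (q i)))"
  shows "h (t 1) \<le> mixing_lhs (\<lambda>i. h (t i) - h (t (i + 1)) + \<delta> (t i)) t {1..l} (\<lambda>i. \<phi> (q i)) q {1..v} (z, x)"
proof -
  define G where "G = {i\<in>{1..v}. j < q i}"
  have GA: "{i\<in>A. j < q i} = G \<inter> A"
    using A by (auto simp: G_def)
  obtain \<beta> :: real where "\<beta> \<ge> 0"
    and beta_A: "\<forall>i\<in>A. j < q i \<longrightarrow> \<phi> (q i) / (real m * \<pi> (q i)) \<le> \<beta>"
    and beta_nA: "\<forall>i\<in>{1..v} - A. j < q i \<longrightarrow> \<beta> \<le> \<phi> (q i) / (real m * \<pi> (q i))"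
    and beta_ineq: "(1 / real m) * (h (t (card {i\<in>{1..l}. t i < j} + 1)) - h j
                - (\<Sum>i\<in>{i\<in>{1..l}. t i < j}. \<delta> (t i))
                - (if j \<in> q ` {1..v} then \<phi> j else 0) - (\<Sum>i\<in>G \<inter> A. \<phi> (q i)))
      \<le> \<beta> * ((\<Sum>i=1..j. \<pi> i) - \<pi> j - \<epsilon> + (\<Sum>i\<in>G. \<pi> (q i)) - (\<Sum>i\<in>G \<inter> A. \<pi> (q i)))"
    using beta unfolding G_def[symmetric] GA by blast
  have X: "(z, x) \<in> Xic m \<epsilon> \<pi>" and x_one: "\<forall>i\<in>{1..<j}. x i = 1"
    and xj: "x j = 0" and zj: "h j \<le> z"
    using zx by (auto simp: prefix_points_def)
  have m_pos: "0 < real m"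
    using j by simp
  have pi_q_pos: "0 < real m * \<pi> (q i)" if "i \<in> G" for i
  proof -
    have "q i \<in> {1..m}"
      using that q(2) by (auto simp: G_def image_subset_iff)
    then show ?thesis
      using pi_pos m_pos by simp
  qed
  define b where "b = real m * \<beta>"
  have "0 \<le> b"
    using \<open>\<beta> \<ge> 0\<close> m_pos by (simp add: b_def)
  have b_A: "\<forall>i\<in>G \<inter> A. \<phi> (q i) \<le> b * \<pi> (q i)"
    using beta_A pi_q_pos by (auto simp: G_def b_def pos_divide_le_eq algebra_simps)
  have b_nA: "\<forall>i\<in>G - A. b * \<pi> (q i) \<le> \<phi> (q i)"
    using beta_nA pi_q_pos by (auto simp: G_def b_def pos_le_divide_eq algebra_simps)
  have b_ineq: "h (t (card {i\<in>{1..l}. t i < j} + 1)) - h j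
                - (\<Sum>i\<in>{i\<in>{1..l}. t i < j}. \<delta> (t i))
                - (if j \<in> q ` {1..v} then \<phi> j else 0) - (\<Sum>i\<in>G \<inter> A. \<phi> (q i))
      \<le> b * ((\<Sum>i=1..j. \<pi> i) - \<pi> j - \<epsilon> + (\<Sum>i\<in>G. \<pi> (q i)) - (\<Sum>i\<in>G \<inter> A. \<pi> (q i)))"
    using mult_left_mono[OF beta_ineq, of "real m"] m_pos by (simp add: b_def mult.assoc)
  have t_ge_1: "1 \<le> t i" if "i \<in> {1..l}" for i
    using t strict_mono_on_leD[OF t(1), of 1 i] that by auto
  have telescoping: "h (t 1) - h (t (card {i\<in>{1..l}. t i < j} + 1)) + (\<Sum>i\<in>{i\<in>{1..l}. t i < j}. \<delta> (t i))
    \<le> (\<Sum>i=1..l. (h (t i) - h (t (i + 1)) + \<delta> (t i)) * x (t i))"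
    using t_ge_1 x_one Xic_bounds[OF X] by (intro sum_telescoping_ge[OF t(1) delta_lb]) auto
  have hit: "(if j \<in> q ` {1..v} then \<phi> j else 0) + (\<Sum>i\<in>G. \<phi> (q i) * (1 - x (q i)))
    \<le> (\<Sum>i=1..v. \<phi> (q i) * (1 - x (q i)))"
    unfolding G_def using phi_nonneg Xic_bounds[OF X] xj by (intro sum_hit_plus_tail_le) auto
  have tail: "(\<Sum>i\<in>G \<inter> A. \<phi> (q i)) + b * ((\<Sum>i\<in>G - A. \<pi> (q i)) - (\<Sum>i\<in>G. \<pi> (q i) * x (q i)))
    \<le> (\<Sum>i\<in>G. \<phi> (q i) * (1 - x (q i)))"
    using Xic_bounds[OF X] b_A b_nA by (intro sum_mult_one_minus_ge) (auto simp: G_def)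
  have "(\<Sum>i\<in>G - A. \<pi> (q i)) = (\<Sum>i\<in>G. \<pi> (q i)) - (\<Sum>i\<in>G \<inter> A. \<pi> (q i))"
    using sum.Int_Diff[of G "\<lambda>i. \<pi> (q i)" A] by (simp add: G_def)
  moreover have "(\<Sum>i\<in>G. \<pi> (q i) * x (q i)) \<le> \<epsilon> - ((\<Sum>i=1..j. \<pi> i) - \<pi> j)"
    unfolding G_def using X pi_pos Xic_bounds[OF X] x_one xj
    by (intro knapsack_tail_le[OF j _ _ _ _ _ q]) (auto simp: Xic_def less_imp_le)
  ultimately have "b * ((\<Sum>i=1..j. \<pi> i) - \<pi> j - \<epsilon> + (\<Sum>i\<in>G. \<pi> (q i)) - (\<Sum>i\<in>G \<inter> A. \<pi> (q i)))
      \<le> b * ((\<Sum>i\<in>G - A. \<pi> (q i)) - (\<Sum>i\<in>G. \<pi> (q i) * x (q i)))"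
    using \<open>0 \<le> b\<close> by (intro mult_left_mono) auto
  with zj b_ineq telescoping hit tail show ?thesis
    unfolding mixing_lhs_def by simp
qed

theorem mainTheorem8:
  fixes m p r l v :: nat and \<epsilon> :: real and \<pi> h \<delta> \<phi> :: "nat \<Rightarrow> real"
    and t q :: "nat \<Rightarrow> nat" and A :: "nat \<Rightarrow> nat set"
  assumes m2: "m \<ge> 2"
    and eps: "0 \<le> \<epsilon>" "\<epsilon> < 1"
    and pi_pos: "\<forall>i\<in>{1..m}. \<pi> i > 0"
    and pi_le: "\<forall>i\<in>{1..m}. \<pi> i \<le> \<epsilon>"
    and pi_sum: "(\<Sum>i=1..m. \<pi> i) = 1"
    and h_mono: "\<forall>i\<in>{1..m}. \<forall>j\<in>{1..m}. i \<le> j \<longrightarrow> h j \<le> h i"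
    and h_nonneg: "h m \<ge> 0"
    and p_def: "p = Max {k\<in>{0..m}. (\<Sum>i=1..k. \<pi> i) \<le> \<epsilon>}"
    and r: "1 \<le> r" "r \<le> p"
    and l: "1 \<le> l" "l \<le> r"
    and t_mono: "\<forall>i\<in>{1..l}. \<forall>j\<in>{1..l}. i < j \<longrightarrow> t i < t j"
    and t_bounds: "1 \<le> t 1" "t l \<le> r"
    and t_last: "t (l + 1) = r + 1"
    and delta_lb: "\<forall>i\<in>{1..l}. \<delta> (t i) \<ge> h (t (i + 1)) - h (t i)"
    and delta_sum: "(\<Sum>i=1..l. \<delta> (t i)) \<le> h (r + 1)"
    and v: "1 \<le> v" "v \<le> p - r + l"
    and q_mono: "\<forall>i\<in>{1..v}. \<forall>j\<in>{1..v}. i < j \<longrightarrow> q i < q j"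
    and q_bounds: "r + 1 \<le> q 1" "q v \<le> m"
    and A_sub: "\<forall>j\<in>{1..m}. A j \<subseteq> {1..v}"
    and phi_nonneg: "\<forall>i\<in>{1..v}. \<phi> (q i) \<ge> 0"
    and beta: "\<forall>j\<in>{1..m}. \<exists>\<beta>::real. \<beta> \<ge> 0
        \<and> (\<forall>i\<in>A j. q i > j \<longrightarrow> \<phi> (q i) / (real m * \<pi> (q i)) \<le> \<beta>)
        \<and> (\<forall>i\<in>{1..v} - A j. q i > j \<longrightarrow> \<beta> \<le> \<phi> (q i) / (real m * \<pi> (q i)))
        \<and> \<beta> * ((\<Sum>i=1..j. \<pi> i) - \<pi> j - \<epsilon>
                + (\<Sum>i\<in>{i\<in>{1..v}. q i > j}. \<pi> (q i))
                - (\<Sum>i\<in>{i\<in>A j. q i > j}. \<pi> (q i)))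
          \<ge> (1 / real m) * (h (t (card {i\<in>{1..l}. t i < j} + 1)) - h j
                - (\<Sum>i\<in>{i\<in>{1..l}. t i < j}. \<delta> (t i))
                - (if j \<in> q ` {1..v} then \<phi> j else 0)
                - (\<Sum>i\<in>{i\<in>A j. q i > j}. \<phi> (q i)))"
  shows "(\<forall>(z, x) \<in> projConvSc m \<epsilon> \<pi> h.
            z + (\<Sum>i=1..l. (h (t i) - h (t (i + 1)) + \<delta> (t i)) * x (t i))
              + (\<Sum>i=1..v. \<phi> (q i) * (1 - x (q i))) \<ge> h (t 1))
       \<and> (\<forall>(z, x) \<in> convex hull (Fc m \<epsilon> \<pi> h).
            z + (\<Sum>i=1..l. (h (t i) - h (t (i + 1)) + \<delta> (t i)) * x (t i))
              + (\<Sum>i=1..v. \<phi> (q i) * (1 - x (q i))) \<ge> h (t 1))"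
proof -
  let ?V = "{w. h (t 1) \<le> mixing_lhs (\<lambda>i. h (t i) - h (t (i + 1)) + \<delta> (t i)) t {1..l}
                                    (\<lambda>i. \<phi> (q i)) q {1..v} w}"
  have t: "strict_mono_on {1..l} t" and q: "strict_mono_on {1..v} q"
    using t_mono q_mono by (auto intro: strict_mono_onI)
  have q_range: "q ` {1..v} \<subseteq> {1..m}"
    using strict_mono_on_image_atLeastAtMost[OF q v(1)] q_bounds by auto
  have prefix_valid: "(\<Union>j\<in>{1..m}. prefix_points m \<epsilon> \<pi> h j) \<subseteq> ?V"
  proof (intro UN_least subsetI)
    fix j w assume j: "j \<in> {1..m}" and w: "w \<in> prefix_points m \<epsilon> \<pi> h j"
    obtain z x where "w = (z, x)"
      by fastforce
    with w show "w \<in> ?V"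
      using mixing_lhs_ge_at_prefix_point[OF j _ pi_pos t t_bounds(1) delta_lb q q_range
          bspec[OF A_sub j] phi_nonneg bspec[OF beta j]]
      by simp
  qed
  have hull_valid: "convex hull S \<subseteq> ?V"
    if "S \<subseteq> (\<Union>j\<in>{1..m}. prefix_points m \<epsilon> \<pi> h j)" for S
    using subset_trans[OF that prefix_valid] convex_mixing_lhs_ge by (rule hull_minimal)
  have "projConvSc m \<epsilon> \<pi> h \<subseteq> ?V"
    unfolding projConvSc_eq_convex_hull
    using hull_valid Sc_proj_subset_prefix_points[OF pi_sum eps(2)] by simp
  moreover have "convex hull (Fc m \<epsilon> \<pi> h) \<subseteq> ?V"
    using hull_valid Fc_subset_prefix_points[OF pi_sum eps(2)] by simp
  ultimately show ?thesis
    unfolding mixing_lhs_def by (auto simp: subset_iff)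
qed

end
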